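(* Let $\mathbf{X}\sim\mathcal{MSP}(\mathbf{0},\boldsymbol{\Sigma}^{\mathrm{row}},\kappa)$ be a $p$-variate $L^2$-continuous process with mean zero on a compact interval $\mathcal{T}=\mathcal{T}_1\cup\dots\cup\mathcal{T}_d$ (pairwise disjoint subintervals), with separable covariance operator $\mathcal{C}=\boldsymbol{\Sigma}^{\mathrm{row}}\mathcal{K}$ and kernel $\mathbf{K}(s,t)=\boldsymbol{\Sigma}^{\mathrm{row}}\kappa(s,t)$. Let $(\lambda_i^{\ker},\xi_i)$, $i=1,\dots,m$, be the $m$ largest eigenpairs of $\mathcal{K}$ (with $\lambda_m^{\ker}>0$), $(\lambda^{\mathrm{row}}_j,\mathbf{v}^{\mathrm{row}}_j)$, $j=1,\dots,p$, the eigenpairs of $\boldsymbol{\Sigma}^{\mathrm{row}}$, $v^{\mathrm{row}}_{j,k}=\mathbf{e}_k'\mathbf{v}^{\mathrm{row}}_j$, and $M=mp$. Then for each $k\in\{1,\dots,p\}$ and $a\in\{1,\dots,d\}$, $$\Theta_{k,\mathcal{T}_a}(\mathbf{X},\mathbf{0};\boldsymbol{\Sigma}^{\mathrm{row}}\kappa,M)=\sum_{i=1}^m\sum_{j=1}^p\frac{1}{\lambda^{\ker}_i\lambda^{\mathrm{row}}_j}\Big(\langle X_k,\xi_i\rangle_{\mathcal{T}_a}v^{\mathrm{row}}_{j,k}\sum_{l=1}^p\langle X_l,\xi_i\rangle_{\mathcal{T}}v^{\mathrm{row}}_{j,l}\Big).$$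
   Context: $\boldsymbol{\Sigma}^{\mathrm{row}}$ is a $p\times p$ symmetric positive definite matrix, $\kappa$ a positive definite kernel, and $\mathcal{K}$ the integral operator with kernel $\kappa$; $\langle f,g\rangle_{\mathcal{T}_a}=\int_{\mathcal{T}_a}fg$, $\langle\mathbf{x},\mathbf{y}\rangle=\sum_j\int_{\mathcal{T}}x_jy_j$. The eigenfunctions of $\mathcal{C}$ are taken as $\xi_i\mathbf{v}^{\mathrm{row}}_j$ with eigenvalues $\lambda^{\ker}_i\lambda^{\mathrm{row}}_j$, and $\mathrm{fMMD}^2(\mathbf{Y},\boldsymbol{\mu};\mathbf{K},M)=\sum_{i,j}(\lambda^{\ker}_i\lambda^{\mathrm{row}}_j)^{-1}\langle\mathbf{Y}-\boldsymbol{\mu},\xi_i\mathbf{v}^{\mathrm{row}}_j\rangle^2$ over these $M=mp$ eigenpairs. For a set $Q\subseteq\{1,\dots,p\}\times\{1,\dots,d\}$, $\hat{\mathbf{X}}^Q$ has $\hat X^Q_j(t)=X_j(t)$ if $t\in\mathcal{T}_b$ with $(j,b)\in Q$ and $\hat X^Q_j(t)=\mu_j(t)$ otherwise (here $\boldsymbol{\mu}=\mathbf{0}$). $\Theta_{k,\mathcal{T}_a}(\mathbf{X},\boldsymbol{\mu};\mathbf{K},M)=\sum_{Q\not\ni(k,a)}\frac{|Q|!(pd-|Q|-1)!}{(pd)!}[v(Q\cup\{(k,a)\})-v(Q)]$ with $v(Q)=\mathrm{fMMD}^2(\hat{\mathbf{X}}^Q,\boldsymbol{\mu};\mathbf{K},M)$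 (Shapley value of cell $(k,a)$). *)

theory Defs
  imports "HOL-Probability.Probability"
begin

definition ip_on :: "real set \<Rightarrow> (real \<Rightarrow> real) \<Rightarrow> (real \<Rightarrow> real) \<Rightarrow> real" where
  "ip_on S f g = (LINT t:S|lborel. f t * g t)"

definition sq_int :: "real set \<Rightarrow> (real \<Rightarrow> real) \<Rightarrow> bool" where
  "sq_int S f \<longleftrightarrow> set_borel_measurable lborel S f \<and> set_integrable lborel S (\<lambda>t. (f t)\<^sup>2)"

definition pd_kernel :: "real set \<Rightarrow> (real \<Rightarrow> real \<Rightarrow> real) \<Rightarrow> bool" where
  "pd_kernel T \<kappa> \<longleftrightarrow> (\<forall>s\<in>T. \<forall>t\<in>T. \<kappa> s t = \<kappa> t s) \<and>
     (\<forall>(n::nat) (ts::nat \<Rightarrow> real) (c::nat \<Rightarrow> real). (\<forall>i<n. ts i \<in> T) \<longrightarrow>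
        (\<Sum>i<n. \<Sum>j<n. c i * c j * \<kappa> (ts i) (ts j)) \<ge> 0)"

definition spd_matrix :: "nat \<Rightarrow> (nat \<Rightarrow> nat \<Rightarrow> real) \<Rightarrow> bool" where
  "spd_matrix p S \<longleftrightarrow> (\<forall>j\<in>{1..p}. \<forall>l\<in>{1..p}. S j l = S l j) \<and>
     (\<forall>c::nat \<Rightarrow> real. (\<exists>j\<in>{1..p}. c j \<noteq> 0) \<longrightarrow>
        (\<Sum>j=1..p. \<Sum>l=1..p. c j * S j l * c l) > 0)"

definition int_op :: "real set \<Rightarrow> (real \<Rightarrow> real \<Rightarrow> real) \<Rightarrow> (real \<Rightarrow> real) \<Rightarrow> real \<Rightarrow> real" where
  "int_op T \<kappa> f s = (LINT t:T|lborel. \<kappa> s t * f t)"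

text \<open>fMMD^2(Y, mu; K, M) with M = m p eigenpairs xi_i v_j (eigenvalues lker_i * lrow_j);
  the l-th component of the eigenfunction xi_i v_j is t \<mapsto> xi_i(t) * v_{j,l}.\<close>
definition fmmd2 ::
  "real set \<Rightarrow> nat \<Rightarrow> nat \<Rightarrow> (nat \<Rightarrow> real) \<Rightarrow> (nat \<Rightarrow> real \<Rightarrow> real) \<Rightarrow>
   (nat \<Rightarrow> real) \<Rightarrow> (nat \<Rightarrow> nat \<Rightarrow> real) \<Rightarrow>
   (nat \<Rightarrow> real \<Rightarrow> real) \<Rightarrow> (nat \<Rightarrow> real \<Rightarrow> real) \<Rightarrow> real" where
  "fmmd2 T p m lker \<xi> lrow vrow Y \<mu> =
     (\<Sum>i=1..m. \<Sum>j=1..p. (1 / (lker i * lrow j)) *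
        (\<Sum>l=1..p. ip_on T (\<lambda>t. Y l t - \<mu> l t) (\<lambda>t. \<xi> i t * vrow j l))\<^sup>2)"

definition hatX :: "(nat \<Rightarrow> real set) \<Rightarrow> (nat \<times> nat) set \<Rightarrow>
    (nat \<Rightarrow> real \<Rightarrow> real) \<Rightarrow> (nat \<Rightarrow> real \<Rightarrow> real) \<Rightarrow> nat \<Rightarrow> real \<Rightarrow> real" where
  "hatX Ts Q X \<mu> j t = (if \<exists>b. (j, b) \<in> Q \<and> t \<in> Ts b then X j t else \<mu> j t)"

definition shapley :: "'c set \<Rightarrow> ('c set \<Rightarrow> real) \<Rightarrow> 'c \<Rightarrow> real" where
  "shapley N v c = (\<Sum>Q\<in>Pow (N - {c}).
      fact (card Q) * fact (card N - card Q - 1) / fact (card N) * (v (insert c Q) - v Q))"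

definition Theta ::
  "real set \<Rightarrow> (nat \<Rightarrow> real set) \<Rightarrow> nat \<Rightarrow> nat \<Rightarrow> nat \<Rightarrow> (nat \<Rightarrow> real) \<Rightarrow> (nat \<Rightarrow> real \<Rightarrow> real) \<Rightarrow>
   (nat \<Rightarrow> real) \<Rightarrow> (nat \<Rightarrow> nat \<Rightarrow> real) \<Rightarrow>
   (nat \<Rightarrow> real \<Rightarrow> real) \<Rightarrow> (nat \<Rightarrow> real \<Rightarrow> real) \<Rightarrow> nat \<Rightarrow> nat \<Rightarrow> real" where
  "Theta T Ts p d m lker \<xi> lrow vrow X \<mu> k a =
     shapley ({1..p} \<times> {1..d})
       (\<lambda>Q. fmmd2 T p m lker \<xi> lrow vrow (hatX Ts Q X \<mu>) \<mu>) (k, a)"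

end

theory Submission
  imports Defs
begin

(* With zero mean, each coefficient of the masked process along xi_i v_j is additive over the
   kept cells, with cell weights w (l, b) = <X_l, xi_i>_{T_b} v_{j,l}; so the game is a linear
   combination of squares of additive games. The Shapley value is linear, and for the square of
   an additive game the marginal contribution of c to Q is w_c^2 + 2 w_c (sum of w over Q). The
   Shapley weights sum to 1 over all coalitions and, by complementation, to 1/2 over those
   containing a fixed player, which gives w_c times the sum of w over all cells. *)

definition shapley_weight :: "nat \<Rightarrow> nat \<Rightarrow> real" where
  "shapley_weight n s = fact s * fact (n - s) / fact (Suc n)"

lemma shapley_weight_complement:
  assumes "s \<le> n"
  shows "shapley_weight n (n - s) = shapley_weight n s"
  using assms by (simp add: shapley_weight_def mult.commute)

lemma binomial_mult_shapley_weight: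
  assumes "s \<le> n"
  shows "real (n choose s) * shapley_weight n s = 1 / Suc n"
proof -
  have "real (n choose s) * (fact s * fact (n - s)) = fact n"
    using binomial_fact_lemma[OF assms] by (metis of_nat_fact of_nat_mult mult.commute)
  then show ?thesis
    unfolding shapley_weight_def by (simp add: field_simps del: of_nat_Suc)
qed

lemma sum_shapley_weight:
  assumes "finite A"
  shows "(\<Sum>Q\<in>Pow A. shapley_weight (card A) (card Q)) = 1"
proof -
  have "(\<Sum>Q\<in>Pow A. shapley_weight (card A) (card Q))
      = (\<Sum>s=0..card A. \<Sum>Q | Q \<in> Pow A \<and> card Q = s. shapley_weight (card A) (card Q))"
    by (rule sum.group[symmetric]) (use assms in \<open>auto intro: card_mono\<close>)
  also have "\<dots> = (\<Sum>s=0..card A. real (card A choose s) * shapley_weight (card A) s)"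
    by (simp add: n_subsets[OF assms] Pow_def)
  also have "\<dots> = (\<Sum>s=0..card A. 1 / Suc (card A))"
    by (simp add: binomial_mult_shapley_weight del: of_nat_Suc)
  finally show ?thesis by simp
qed

lemma sum_shapley_weight_mem:
  assumes "finite A" "x \<in> A"
  shows "(\<Sum>Q | Q \<subseteq> A \<and> x \<in> Q. shapley_weight (card A) (card Q)) = 1 / 2"
proof -
  let ?W = "\<lambda>Q. shapley_weight (card A) (card Q)"
  let ?In = "{Q. Q \<subseteq> A \<and> x \<in> Q}" and ?Out = "{Q. Q \<subseteq> A \<and> x \<notin> Q}"
  have complement: "?W (A - Q) = ?W Q" if "Q \<in> ?Out" for Q
  proof -
    have "finite Q" "card Q \<le> card A"
      using that assms(1) by (auto intro: finite_subset card_mono)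
    then show ?thesis
      using that by (simp add: card_Diff_subset shapley_weight_complement)
  qed
  have "bij_betw (\<lambda>Q. A - Q) ?Out ?In"
    by (rule bij_betwI[where g="\<lambda>Q. A - Q"]) (use assms(2) in auto)
  then have "sum ?W ?In = (\<Sum>Q\<in>?Out. ?W (A - Q))"
    by (rule sum.reindex_bij_betw[symmetric])
  also have "\<dots> = sum ?W ?Out"
    using complement by (rule sum.cong[OF refl])
  finally have "sum ?W ?In = sum ?W ?Out" .
  moreover have "sum ?W ?In + sum ?W ?Out = 1"
  proof -
    have "Pow A = ?In \<union> ?Out" by auto
    moreover have "finite ?In" "finite ?Out" "?In \<inter> ?Out = {}"
      using assms(1) by auto
    ultimately show ?thesis
      using sum_shapley_weight[OF assms(1)] by (simp add: sum.union_disjoint[symmetric])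
  qed
  ultimately show ?thesis by linarith
qed

lemma shapley_eq_weight:
  assumes "finite N" "c \<in> N"
  shows "shapley N v c = (\<Sum>Q\<in>Pow (N - {c}).
    shapley_weight (card (N - {c})) (card Q) * (v (insert c Q) - v Q))"
proof -
  have "card N = Suc (card (N - {c}))"
    using assms by (metis card_Suc_Diff1)
  then show ?thesis
    unfolding shapley_def shapley_weight_def by simp
qed

lemma shapley_sum:
  "shapley N (\<lambda>Q. \<Sum>y\<in>Y. g y Q) c = (\<Sum>y\<in>Y. shapley N (g y) c)"
  unfolding shapley_def
  by (simp add: sum_subtractf[symmetric] sum_distrib_left right_diff_distrib) (rule sum.swap)

lemma shapley_mult:
  "shapley N (\<lambda>Q. r * g Q) c = r * shapley N g c"
  unfolding shapley_def by (simp add: sum_distrib_left algebra_simps)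

lemma shapley_cong:
  assumes "\<And>Q. Q \<subseteq> N \<Longrightarrow> v Q = v' Q" "c \<in> N"
  shows "shapley N v c = shapley N v' c"
proof -
  have "insert c Q \<subseteq> N" "Q \<subseteq> N" if "Q \<in> Pow (N - {c})" for Q
    using that assms(2) by auto
  then show ?thesis
    unfolding shapley_def by (intro sum.cong refl) (simp add: assms(1))
qed

lemma shapley_square_of_additive:
  fixes w :: "'c \<Rightarrow> real"
  assumes "finite N" "c \<in> N"
  shows "shapley N (\<lambda>Q. (\<Sum>x\<in>Q. w x)\<^sup>2) c = w c * (\<Sum>x\<in>N. w x)"
proof -
  define A where "A = N - {c}"
  let ?W = "\<lambda>Q. shapley_weight (card A) (card Q)"
  have A: "finite A" "c \<notin> A" using assms(1) by (auto simp: A_def)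
  have marginal: "(\<Sum>x\<in>insert c Q. w x)\<^sup>2 - (\<Sum>x\<in>Q. w x)\<^sup>2 = (w c)\<^sup>2 + 2 * w c * (\<Sum>x\<in>Q. w x)"
    if "Q \<in> Pow A" for Q
  proof -
    have "finite Q" "c \<notin> Q"
      using that A by (auto intro: finite_subset)
    then show ?thesis by (simp add: power2_sum)
  qed
  have mem: "(\<Sum>Q\<in>Pow A. ?W Q * (\<Sum>x\<in>Q. w x)) = (\<Sum>x\<in>A. w x) / 2"
  proof -
    have "(\<Sum>Q\<in>Pow A. ?W Q * (\<Sum>x\<in>Q. w x)) = (\<Sum>Q\<in>Pow A. \<Sum>x | x \<in> A \<and> x \<in> Q. ?W Q * w x)"
    proof (rule sum.cong[OF refl])
      fix Q assume "Q \<in> Pow A"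
      then have "{x. x \<in> A \<and> x \<in> Q} = Q" by auto
      then show "?W Q * (\<Sum>x\<in>Q. w x) = (\<Sum>x | x \<in> A \<and> x \<in> Q. ?W Q * w x)"
        by (simp add: sum_distrib_left)
    qed
    also have "\<dots> = (\<Sum>x\<in>A. \<Sum>Q | Q \<in> Pow A \<and> x \<in> Q. ?W Q * w x)"
      using A(1) by (intro sum.swap_restrict) auto
    also have "\<dots> = (\<Sum>x\<in>A. w x / 2)"
    proof (rule sum.cong[OF refl])
      fix x assume "x \<in> A"
      have "{Q. Q \<in> Pow A \<and> x \<in> Q} = {Q. Q \<subseteq> A \<and> x \<in> Q}" by auto
      then show "(\<Sum>Q | Q \<in> Pow A \<and> x \<in> Q. ?W Q * w x) = w x / 2"
        by (simp add: sum_distrib_right[symmetric] sum_shapley_weight_mem[OF A(1) \<open>x \<in> A\<close>])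
    qed
    finally show ?thesis by (simp add: sum_divide_distrib)
  qed
  have "shapley N (\<lambda>Q. (\<Sum>x\<in>Q. w x)\<^sup>2) c
      = (\<Sum>Q\<in>Pow A. ?W Q * ((w c)\<^sup>2 + 2 * w c * (\<Sum>x\<in>Q. w x)))"
    unfolding shapley_eq_weight[OF assms] A_def[symmetric] by (simp add: marginal)
  also have "\<dots> = (w c)\<^sup>2 * (\<Sum>Q\<in>Pow A. ?W Q) + 2 * w c * (\<Sum>Q\<in>Pow A. ?W Q * (\<Sum>x\<in>Q. w x))"
    by (simp add: distrib_left sum.distrib sum_distrib_left mult_ac)
  also have "\<dots> = w c * (w c + (\<Sum>x\<in>A. w x))"
    unfolding mem sum_shapley_weight[OF A(1)] by (simp add: power2_eq_square algebra_simps)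
  also have "\<dots> = w c * (\<Sum>x\<in>N. w x)"
    using assms by (simp add: A_def sum.remove)
  finally show ?thesis .
qed

lemma sq_int_set_integrable_mult:
  assumes "sq_int T f" "sq_int T g"
  shows "set_integrable lborel T (\<lambda>t. f t * g t)"
proof (rule set_integrable_bound)
  show "set_integrable lborel T (\<lambda>t. (f t)\<^sup>2 + (g t)\<^sup>2)"
    using assms unfolding sq_int_def by (intro set_integral_add) auto
  have "(\<lambda>t. (indicator T t *\<^sub>R f t) * (indicator T t *\<^sub>R g t)) \<in> borel_measurable lborel"
    using assms unfolding sq_int_def set_borel_measurable_def by (auto intro: borel_measurable_times)
  moreover have "(\<lambda>t. indicator T t *\<^sub>R (f t * g t)) = (\<lambda>t. (indicator T t *\<^sub>R f t) * (indicator T t *\<^sub>R g t))"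
    by (auto simp: indicator_def)
  ultimately show "set_borel_measurable lborel T (\<lambda>t. f t * g t)"
    unfolding set_borel_measurable_def by simp
  have "\<bar>x * y\<bar> \<le> x\<^sup>2 + y\<^sup>2" for x y :: real
  proof -
    have "2 * (\<bar>x\<bar> * \<bar>y\<bar>) \<le> x\<^sup>2 + y\<^sup>2" "0 \<le> \<bar>x\<bar> * \<bar>y\<bar>"
      using sum_squares_bound[of "\<bar>x\<bar>" "\<bar>y\<bar>"] by (simp_all add: mult.assoc)
    then show ?thesis unfolding abs_mult by linarith
  qed
  then show "AE t in lborel. t \<in> T \<longrightarrow> norm (f t * g t) \<le> norm ((f t)\<^sup>2 + (g t)\<^sup>2)"
    by simp
qed

lemma ip_on_UN:
  assumes "finite B" "disjoint_family_on Ts B" "\<And>b. b \<in> B \<Longrightarrow> Ts b \<in> sets lborel"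
    and "(\<Union>b\<in>B. Ts b) \<subseteq> T" "set_integrable lborel T (\<lambda>t. f t * g t)"
  shows "ip_on (\<Union>b\<in>B. Ts b) f g = (\<Sum>b\<in>B. ip_on (Ts b) f g)"
  unfolding ip_on_def using assms
  by (intro set_integral_finite_Union) (auto intro!: set_integrable_subset[OF assms(5)])

lemma ip_on_mask:
  assumes "U \<subseteq> T"
  shows "ip_on T (\<lambda>t. if t \<in> U then f t else 0) g = ip_on U f g"
  unfolding ip_on_def set_lebesgue_integral_def
  using assms by (intro Bochner_Integration.integral_cong) (auto simp: indicator_def)

lemma ip_on_hatX_zero:
  assumes "finite D" "disjoint_family_on Ts D" "\<And>b. b \<in> D \<Longrightarrow> Ts b \<in> sets lborel"
    and "(\<Union>b\<in>D. Ts b) = T" "set_integrable lborel T (\<lambda>t. x l t * g t)"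
    and "Q \<subseteq> UNIV \<times> D"
  shows "ip_on T (hatX Ts Q x (\<lambda>_ _. 0) l) g = (\<Sum>b | b \<in> D \<and> (l, b) \<in> Q. ip_on (Ts b) (x l) g)"
proof -
  let ?B = "{b. b \<in> D \<and> (l, b) \<in> Q}"
  have mask: "hatX Ts Q x (\<lambda>_ _. 0) l = (\<lambda>t. if t \<in> (\<Union>b\<in>?B. Ts b) then x l t else 0)"
    using assms(6) by (auto simp: hatX_def fun_eq_iff)
  have "ip_on T (hatX Ts Q x (\<lambda>_ _. 0) l) g = ip_on (\<Union>b\<in>?B. Ts b) (x l) g"
    unfolding mask using assms(4) by (intro ip_on_mask) auto
  also have "\<dots> = (\<Sum>b\<in>?B. ip_on (Ts b) (x l) g)"
    using assms(1-5) by (intro ip_on_UN) (auto simp: disjoint_family_on_def)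
  finally show ?thesis .
qed

lemma fmmd2_hatX_zero_mean:
  assumes "finite D" "disjoint_family_on Ts D" "\<And>b. b \<in> D \<Longrightarrow> Ts b \<in> sets lborel"
    and "(\<Union>b\<in>D. Ts b) = T"
    and "\<And>i l. i \<in> {1..m} \<Longrightarrow> l \<in> {1..p} \<Longrightarrow> set_integrable lborel T (\<lambda>t. x l t * \<xi> i t)"
    and "Q \<subseteq> {1..p} \<times> D"
  shows "fmmd2 T p m lker \<xi> lrow vrow (hatX Ts Q x (\<lambda>_ _. 0)) (\<lambda>_ _. 0) =
    (\<Sum>i=1..m. \<Sum>j=1..p. 1 / (lker i * lrow j) * (\<Sum>(l, b)\<in>Q. ip_on (Ts b) (x l) (\<xi> i) * vrow j l)\<^sup>2)"
  unfolding fmmd2_def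
proof (intro sum.cong refl arg_cong2[where f="(*)"] arg_cong[where f="\<lambda>y. y\<^sup>2"])
  fix i j assume i: "i \<in> {1..m}"
  let ?B = "\<lambda>l. {b. b \<in> D \<and> (l, b) \<in> Q}"
  have "(\<Sum>l=1..p. ip_on T (\<lambda>t. hatX Ts Q x (\<lambda>_ _. 0) l t - 0) (\<lambda>t. \<xi> i t * vrow j l))
      = (\<Sum>l=1..p. ip_on T (hatX Ts Q x (\<lambda>_ _. 0) l) (\<xi> i) * vrow j l)"
    unfolding ip_on_def by (simp add: mult.assoc[symmetric])
  also have "\<dots> = (\<Sum>l=1..p. \<Sum>b\<in>?B l. ip_on (Ts b) (x l) (\<xi> i) * vrow j l)"
  proof (rule sum.cong[OF refl])
    fix l assume l: "l \<in> {1..p}"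
    have "Q \<subseteq> UNIV \<times> D" using assms(6) by auto
    from ip_on_hatX_zero[where x=x and l=l and g="\<xi> i", OF assms(1-4) assms(5)[OF i l] this]
    show "ip_on T (hatX Ts Q x (\<lambda>_ _. 0) l) (\<xi> i) * vrow j l
        = (\<Sum>b\<in>?B l. ip_on (Ts b) (x l) (\<xi> i) * vrow j l)"
      by (simp add: sum_distrib_right)
  qed
  also have "\<dots> = (\<Sum>(l, b)\<in>Sigma {1..p} ?B. ip_on (Ts b) (x l) (\<xi> i) * vrow j l)"
    using assms(1) by (intro sum.Sigma) auto
  also have "Sigma {1..p} ?B = Q"
    using assms(6) by auto
  finally show "(\<Sum>l=1..p. ip_on T (\<lambda>t. hatX Ts Q x (\<lambda>_ _. 0) l t - 0) (\<lambda>t. \<xi> i t * vrow j l))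
      = (\<Sum>(l, b)\<in>Q. ip_on (Ts b) (x l) (\<xi> i) * vrow j l)" .
qed

theorem corollary2:
  fixes M :: "'w measure"
    and X :: "'w \<Rightarrow> nat \<Rightarrow> real \<Rightarrow> real"
    and \<alpha> \<beta> :: real and T :: "real set" and Ts :: "nat \<Rightarrow> real set"
    and p d m :: nat
    and Srow :: "nat \<Rightarrow> nat \<Rightarrow> real" and \<kappa> :: "real \<Rightarrow> real \<Rightarrow> real"
    and lker :: "nat \<Rightarrow> real" and \<xi> :: "nat \<Rightarrow> real \<Rightarrow> real"
    and lrow :: "nat \<Rightarrow> real" and vrow :: "nat \<Rightarrow> nat \<Rightarrow> real"
    and \<omega> :: 'w and k a :: nat
  assumes T_def: "T = {\<alpha>..\<beta>}" and "\<alpha> < \<beta>"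
    and "p \<ge> 1" and "d \<ge> 1" and "m \<ge> 1"
    and Ts_int: "\<forall>b\<in>{1..d}. is_interval (Ts b)"
    and Ts_disj: "\<forall>b\<in>{1..d}. \<forall>b'\<in>{1..d}. b \<noteq> b' \<longrightarrow> Ts b \<inter> Ts b' = {}"
    and Ts_union: "(\<Union>b\<in>{1..d}. Ts b) = T"
    \<comment> \<open>the process: mean zero, separable covariance Srow(j,l) * kappa(s,t), L2-continuous\<close>
    and "prob_space M"
    and rv: "\<forall>j\<in>{1..p}. \<forall>t\<in>T. (\<lambda>w. X w j t) \<in> borel_measurable M
                 \<and> integrable M (\<lambda>w. (X w j t)\<^sup>2)"
    and mean0: "\<forall>j\<in>{1..p}. \<forall>t\<in>T. prob_space.expectation M (\<lambda>w. X w j t) = 0"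
    and cov: "\<forall>j\<in>{1..p}. \<forall>l\<in>{1..p}. \<forall>s\<in>T. \<forall>t\<in>T.
                 prob_space.expectation M (\<lambda>w. X w j s * X w l t) = Srow j l * \<kappa> s t"
    and L2cont: "\<forall>j\<in>{1..p}. \<forall>t\<in>T.
                 ((\<lambda>s. prob_space.expectation M (\<lambda>w. (X w j s - X w j t)\<^sup>2)) \<longlongrightarrow> 0) (at t within T)"
    and spd: "spd_matrix p Srow"
    and pdk: "pd_kernel T \<kappa>"
    \<comment> \<open>the m largest eigenpairs of the integral operator K (orthonormal in L2(T))\<close>
    and xi_sq: "\<forall>i\<in>{1..m}. sq_int T (\<xi> i)"
    and xi_on: "\<forall>i\<in>{1..m}. \<forall>i'\<in>{1..m}. ip_on T (\<xi> i) (\<xi> i') = (if i = i' then 1 else 0)"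
    and xi_eig: "\<forall>i\<in>{1..m}. \<forall>s\<in>T. int_op T \<kappa> (\<xi> i) s = lker i * \<xi> i s"
    and lker_dec: "\<forall>i\<in>{1..m}. \<forall>i'\<in>{1..m}. i \<le> i' \<longrightarrow> lker i' \<le> lker i"
    and lker_pos: "lker m > 0"
    and lker_largest: "\<forall>g \<mu>. sq_int T g \<and> ip_on T g g > 0
                 \<and> (\<forall>i\<in>{1..m}. ip_on T g (\<xi> i) = 0)
                 \<and> (\<forall>s\<in>T. int_op T \<kappa> g s = \<mu> * g s) \<longrightarrow> \<mu> \<le> lker m"
    \<comment> \<open>the eigenpairs of Srow (orthonormal eigenvectors)\<close>
    and v_eig: "\<forall>j\<in>{1..p}. \<forall>k'\<in>{1..p}. (\<Sum>l=1..p. Srow k' l * vrow j l) = lrow j * vrow j k'"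
    and v_on: "\<forall>j\<in>{1..p}. \<forall>j'\<in>{1..p}. (\<Sum>l=1..p. vrow j l * vrow j' l) = (if j = j' then 1 else 0)"
    \<comment> \<open>a realisation of the process with square-integrable paths\<close>
    and "\<omega> \<in> space M"
    and paths: "\<forall>l\<in>{1..p}. sq_int T (X \<omega> l)"
    and "k \<in> {1..p}" and "a \<in> {1..d}"
  shows "Theta T Ts p d m lker \<xi> lrow vrow (X \<omega>) (\<lambda>_ _. 0) k a =
     (\<Sum>i=1..m. \<Sum>j=1..p. (1 / (lker i * lrow j)) *
        (ip_on (Ts a) (X \<omega> k) (\<xi> i) * vrow j k *
          (\<Sum>l=1..p. ip_on T (X \<omega> l) (\<xi> i) * vrow j l)))"
proof -
  define N where "N = {1..p} \<times> {1..d}"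
  define w where "w i j = (\<lambda>(l, b). ip_on (Ts b) (X \<omega> l) (\<xi> i) * vrow j l)" for i j
  have N: "finite N" "(k, a) \<in> N"
    using \<open>k \<in> {1..p}\<close> \<open>a \<in> {1..d}\<close> by (auto simp: N_def)
  have Ts: "disjoint_family_on Ts {1..d}" "\<And>b. b \<in> {1..d} \<Longrightarrow> Ts b \<in> sets lborel"
    using Ts_disj Ts_int by (auto simp: disjoint_family_on_def real_interval_borel_measurable)
  have int: "set_integrable lborel T (\<lambda>t. X \<omega> l t * \<xi> i t)"
    if "i \<in> {1..m}" "l \<in> {1..p}" for i l
    using paths xi_sq that by (simp add: sq_int_set_integrable_mult)
  have total: "(\<Sum>x\<in>N. w i j x) = (\<Sum>l=1..p. ip_on T (X \<omega> l) (\<xi> i) * vrow j l)"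
    if "i \<in> {1..m}" for i j
    unfolding N_def w_def sum.cartesian_product[symmetric]
    using ip_on_UN[OF _ Ts, of T] Ts_union int that by (simp add: sum_distrib_right)
  have "Theta T Ts p d m lker \<xi> lrow vrow (X \<omega>) (\<lambda>_ _. 0) k a =
      shapley N (\<lambda>Q. \<Sum>i=1..m. \<Sum>j=1..p. 1 / (lker i * lrow j) * (\<Sum>x\<in>Q. w i j x)\<^sup>2) (k, a)"
    unfolding Theta_def N_def[symmetric]
    by (rule shapley_cong[OF _ N(2)])
      (unfold w_def, rule fmmd2_hatX_zero_mean[OF _ Ts Ts_union int], auto simp: N_def)
  also have "\<dots> = (\<Sum>i=1..m. \<Sum>j=1..p. 1 / (lker i * lrow j) * (w i j (k, a) * (\<Sum>x\<in>N. w i j x)))"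
    by (simp only: shapley_sum shapley_mult shapley_square_of_additive[OF N])
  also have "\<dots> = (\<Sum>i=1..m. \<Sum>j=1..p. 1 / (lker i * lrow j) *
        (ip_on (Ts a) (X \<omega> k) (\<xi> i) * vrow j k *
          (\<Sum>l=1..p. ip_on T (X \<omega> l) (\<xi> i) * vrow j l)))"
    using total by (intro sum.cong refl) (simp add: w_def)
  finally show ?thesis .
qed

end
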